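(* Let $m\ge 1$ be a fixed integer and $c>\frac{1}{m}$ a fixed constant, and let $T$ be the total population of the $m$-fold Poisson branching process $T^{po}_{m,c}$. Then there exists a positive constant $C=C(m,c)$ such that for every positive integer $K$, $$\Pr(T=K)<e^{-CK}.$$
   Context: An $m$-fold Poisson random variable with parameter $c$ is a random variable $Z$ with $\Pr(Z=k)=e^{-c}\frac{c^{k/m}}{(k/m)!}$ if $m\mid k$ and $\Pr(Z=k)=0$ otherwise ($k\ge 0$); i.e. $m$ times a Poisson$(c)$ variable. The $m$-fold Poisson branching process $T^{po}_{m,c}$ is the Galton–Watson process $Y_0=1$, $Y_t=Y_{t-1}-1+Z_t$ for $t\ge1$, where $Z_1,Z_2,\dots$ are i.i.d. $m$-fold Poisson variables with parameter $c$. Its total population $T$ is the least $t$ with $Y_t=0$ (the total number of nodes created, including the root), with $T=\infty$ if no such $t$ exists. *)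

theory Defs
  imports "HOL-Probability.Probability" "HOL-Library.Extended_Nat"
begin

definition mfold_poisson_pmf :: "nat \<Rightarrow> real \<Rightarrow> nat pmf" where
  "mfold_poisson_pmf m c = map_pmf (\<lambda>k. m * k) (poisson_pmf c)"

text \<open>The walk Y_0 = 1, Y_t = Y_(t-1) - 1 + Z_t; Z indexed from 1 (Z 0 unused).\<close>
definition bp_Y :: "(nat \<Rightarrow> 'a \<Rightarrow> nat) \<Rightarrow> nat \<Rightarrow> 'a \<Rightarrow> int" where
  "bp_Y Z t \<omega> = 1 - int t + (\<Sum>i\<in>{1..t}. int (Z i \<omega>))"

definition bp_T :: "(nat \<Rightarrow> 'a \<Rightarrow> nat) \<Rightarrow> 'a \<Rightarrow> enat" where
  "bp_T Z \<omega> = (if \<exists>t. bp_Y Z t \<omega> = 0 then enat (LEAST t. bp_Y Z t \<omega> = 0) else \<infinity>)"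

end

theory Submission
  imports Defs
begin

text \<open>If the total population is \<open>K\<close>, then \<open>Z\<^sub>1 + \<dots> + Z\<^sub>K = K - 1 \<le> K\<close>. A Chernoff bound for this
  sum of independent variables gives, for every \<open>s > 0\<close>, the probability bound
  \<open>exp ((s + c (e\<^sup>-\<^sup>s\<^sup>m - 1)) K)\<close>. The optimal choice \<open>s = ln (c m) / m\<close> makes the exponent
  \<open>(1 + ln (c m) - c m) K / m\<close>, which is negative exactly because \<open>c m > 1\<close>.\<close>

lemma (in prob_space) emeasure_sum_le_indep_Chernoff:
  fixes X :: "'i \<Rightarrow> 'a \<Rightarrow> real"
  assumes "finite I" and indep: "indep_vars (\<lambda>_. borel) X I" and "s > 0"
  shows "emeasure M {x \<in> space M. (\<Sum>i\<in>I. X i x) \<le> a}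
           \<le> ennreal (exp (s * a)) * (\<Prod>i\<in>I. \<integral>\<^sup>+x. ennreal (exp (- s * X i x)) \<partial>M)"
proof -
  have [measurable]: "X i \<in> borel_measurable M" if "i \<in> I" for i
    using indep that by (simp add: indep_vars_def)
  have "emeasure M {x \<in> space M. (\<Sum>i\<in>I. X i x) \<le> a}
          \<le> ennreal (exp (s * a)) * (\<integral>\<^sup>+x. ennreal (exp (- s * (\<Sum>i\<in>I. X i x))) * indicator (space M) x \<partial>M)"
    using \<open>s > 0\<close> by (intro Chernoff_ineq_nn_integral_le) auto
  also have "(\<integral>\<^sup>+x. ennreal (exp (- s * (\<Sum>i\<in>I. X i x))) * indicator (space M) x \<partial>M)
           = (\<integral>\<^sup>+x. (\<Prod>i\<in>I. ennreal (exp (- s * X i x))) \<partial>M)"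
    by (intro nn_integral_cong)
       (simp add: sum_distrib_left exp_sum \<open>finite I\<close> prod_ennreal flip: sum_negf)
  also have "\<dots> = (\<Prod>i\<in>I. \<integral>\<^sup>+x. ennreal (exp (- s * X i x)) \<partial>M)"
    by (intro indep_vars_nn_integral \<open>finite I\<close> indep_vars_compose2[OF indep]) auto
  finally show ?thesis .
qed

lemma nn_integral_poisson_exp:
  assumes "c > 0"
  shows "(\<integral>\<^sup>+k. ennreal (exp (- s * real k)) \<partial>measure_pmf (poisson_pmf c))
           = ennreal (exp (c * (exp (- s) - 1)))"
proof -
  have "(\<lambda>k. exp (- c) * ((c * exp (- s)) ^ k /\<^sub>R fact k)) sums (exp (- c) * exp (c * exp (- s)))"
    by (intro sums_mult exp_converges)
  moreover have "pmf (poisson_pmf c) k * exp (- s * real k) = exp (- c) * ((c * exp (- s)) ^ k /\<^sub>R fact k)"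
    for k
    using assms by (simp add: power_mult_distrib field_simps flip: exp_of_nat_mult exp_add)
  ultimately have sums: "(\<lambda>k. pmf (poisson_pmf c) k * exp (- s * real k)) sums exp (c * (exp (- s) - 1))"
    by (simp add: mult_exp_exp algebra_simps)
  have "(\<integral>\<^sup>+k. ennreal (exp (- s * real k)) \<partial>measure_pmf (poisson_pmf c))
          = (\<Sum>k. ennreal (pmf (poisson_pmf c) k * exp (- s * real k)))"
    by (simp add: nn_integral_measure_pmf nn_integral_count_space_nat ennreal_mult)
  also have "\<dots> = ennreal (exp (c * (exp (- s) - 1)))"
    using sums by (simp add: suminf_ennreal2 sums_iff)
  finally show ?thesis .
qed

lemma nn_integral_mfold_poisson_exp:
  assumes "c > 0"
  shows "(\<integral>\<^sup>+n. ennreal (exp (- s * real n)) \<partial>measure_pmf (mfold_poisson_pmf m c))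
           = ennreal (exp (c * (exp (- s * real m) - 1)))"
  using nn_integral_poisson_exp[OF assms, of "s * real m"]
  by (simp add: mfold_poisson_pmf_def map_pmf_rep_eq nn_integral_distr mult.assoc)

lemma bp_T_eq_enat_sum:
  assumes "bp_T Z \<omega> = enat K"
  shows "(\<Sum>i\<in>{1..K}. Z i \<omega>) + 1 = K"
proof -
  have "\<exists>t. bp_Y Z t \<omega> = 0" and "(LEAST t. bp_Y Z t \<omega> = 0) = K"
    using assms by (auto simp: bp_T_def split: if_splits)
  then have "bp_Y Z K \<omega> = 0"
    using LeastI_ex[of "\<lambda>t. bp_Y Z t \<omega> = 0"] by simp
  then have "int (\<Sum>i\<in>{1..K}. Z i \<omega>) = int K - 1"
    by (simp add: bp_Y_def)
  then show ?thesis
    by linarith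
qed

lemma (in prob_space) measure_bp_T_eq_le:
  assumes indep: "indep_vars (\<lambda>_. count_space UNIV) Z {1..}"
    and distr: "\<And>i. i \<ge> 1 \<Longrightarrow> distr M (count_space UNIV) (Z i) = measure_pmf (mfold_poisson_pmf m c)"
    and "c > 0" and "s > 0"
  shows "measure M {\<omega> \<in> space M. bp_T Z \<omega> = enat K} \<le> exp ((s + c * (exp (- s * real m) - 1)) * real K)"
proof -
  define r where "r = c * (exp (- s * real m) - 1)"
  define B where "B = {\<omega> \<in> space M. (\<Sum>i\<in>{1..K}. real (Z i \<omega>)) \<le> real K}"
  have indep_K: "indep_vars (\<lambda>_. borel) (\<lambda>i \<omega>. real (Z i \<omega>)) {1..K}"
    by (rule indep_vars_compose2[OF indep_vars_subset[OF indep]]) auto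
  have [measurable]: "Z i \<in> measurable M (count_space UNIV)" if "i \<in> {1..K}" for i
    using indep that by (simp add: indep_vars_def)
  have mgf: "(\<integral>\<^sup>+\<omega>. ennreal (exp (- s * real (Z i \<omega>))) \<partial>M) = ennreal (exp r)"
    if "i \<in> {1..K}" for i
  proof -
    have "(\<integral>\<^sup>+\<omega>. ennreal (exp (- s * real (Z i \<omega>))) \<partial>M)
            = (\<integral>\<^sup>+n. ennreal (exp (- s * real n)) \<partial>distr M (count_space UNIV) (Z i))"
      using that by (simp add: nn_integral_distr)
    then show ?thesis
      using that distr nn_integral_mfold_poisson_exp[OF \<open>c > 0\<close>] by (simp add: r_def)
  qed
  have "(\<Prod>i\<in>{1..K}. \<integral>\<^sup>+\<omega>. ennreal (exp (- s * real (Z i \<omega>))) \<partial>M) = ennreal (exp r) ^ K"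
    using mgf by simp
  then have "emeasure M B \<le> ennreal (exp (s * real K)) * ennreal (exp r) ^ K"
    using emeasure_sum_le_indep_Chernoff[OF _ indep_K \<open>s > 0\<close>, of "real K"]
    by (simp only: B_def finite_atLeastAtMost)
  also have "\<dots> = ennreal (exp ((s + r) * real K))"
    by (simp add: ennreal_power algebra_simps mult_exp_exp flip: ennreal_mult exp_of_nat_mult)
  finally have "measure M B \<le> exp ((s + r) * real K)"
    by (simp add: emeasure_eq_measure)
  moreover have "measure M {\<omega> \<in> space M. bp_T Z \<omega> = enat K} \<le> measure M B"
  proof (rule finite_measure_mono)
    show "B \<in> sets M"
      unfolding B_def by measurable
    have "(\<Sum>i\<in>{1..K}. Z i \<omega>) \<le> K" if "bp_T Z \<omega> = enat K" for \<omega>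
      using bp_T_eq_enat_sum[OF that] by linarith
    then show "{\<omega> \<in> space M. bp_T Z \<omega> = enat K} \<subseteq> B"
      unfolding B_def by (auto simp flip: of_nat_sum)
  qed
  ultimately show ?thesis
    unfolding r_def by linarith
qed

theorem lemma3:
  fixes M :: "'a measure" and Z :: "nat \<Rightarrow> 'a \<Rightarrow> nat" and m :: nat and c :: real
  assumes "prob_space M"
    and "m \<ge> 1" and "c > 1 / real m"
    and "prob_space.indep_vars M (\<lambda>_. count_space UNIV) Z {1..}"
    and "\<And>i. i \<ge> 1 \<Longrightarrow> Z i \<in> measurable M (count_space UNIV)"
    and "\<And>i. i \<ge> 1 \<Longrightarrow> distr M (count_space UNIV) (Z i) = measure_pmf (mfold_poisson_pmf m c)"
  shows "\<exists>C>0. \<forall>K::nat. K \<ge> 1 \<longrightarrow>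
           measure M {\<omega> \<in> space M. bp_T Z \<omega> = enat K} < exp (- C * real K)"
proof -
  interpret prob_space M by fact
  have "real m > 0" and cm: "c * real m > 1"
    using assms(2,3) by (auto simp: field_simps)
  define s where "s = ln (c * real m) / real m"
  define C where "C = - (s + c * (exp (- s * real m) - 1))"
  have "c > 0"
    using \<open>real m > 0\<close> cm zero_less_mult_iff[of c "real m"] by linarith
  have "s > 0"
    using \<open>real m > 0\<close> cm by (simp add: s_def)
  have "exp (- s * real m) = 1 / (c * real m)"
    using \<open>real m > 0\<close> cm by (simp add: s_def exp_minus field_simps)
  then have "C = (c * real m - 1 - ln (c * real m)) / real m"
    using \<open>real m > 0\<close> \<open>c > 0\<close> by (simp add: C_def s_def field_simps)
  moreover have "ln (c * real m) < c * real m - 1"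
    using ln_diff_less[of "c * real m" 1] cm by simp
  ultimately have "C > 0"
    using \<open>real m > 0\<close> by simp
  have "measure M {\<omega> \<in> space M. bp_T Z \<omega> = enat K} < exp (- (C / 2) * real K)" if "K \<ge> 1" for K
  proof -
    have "measure M {\<omega> \<in> space M. bp_T Z \<omega> = enat K} \<le> exp (- C * real K)"
      using measure_bp_T_eq_le[OF assms(4,6) \<open>c > 0\<close> \<open>s > 0\<close>, of K]
      unfolding C_def by (simp only: minus_minus mult_minus_left)
    also have "\<dots> < exp (- (C / 2) * real K)"
      using \<open>C > 0\<close> that by simp
    finally show ?thesis .
  qed
  then show ?thesis
    using \<open>C > 0\<close> by (intro exI[of _ "C / 2"]) auto
qed

end
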